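(* Let $U$ and $V$ be distinct Euclidean discs in $\mathbb{C}$ with centres $u,v$ and radii $r,s$ respectively, with $V\subset U$. Suppose that for some point $z\in\Pi(U)$, $$\frac{r}{s}<\min\left\{2,\ 1+\tfrac18\sinh\rho(z,\Pi(V))\right\}.$$ Then $h(z)<s/2$. Moreover, if $w$ is the point of $\Pi(V)$ with $h(w)=h(z)$ that is closest in Euclidean distance to $z$, then $|z-w|<3(r-s)$.
   Context: $\mathbb{H}^3=\{(x,y,t)\in\mathbb{R}^3:t>0\}$ with the hyperbolic metric $\rho$ given by the density $ds/t$, and $\mathbb{C}$ is identified with the plane $t=0$. For $z=(x,y,t)\in\mathbb{H}^3$, $h(z)=t$. For a Euclidean disc $D\subset\mathbb{C}$ with centre $c$ and radius $r$, $\Pi(D)=\{z\in\mathbb{H}^3:|z-c|=r\}$ is the hyperbolic plane (hemisphere) over $D$; $\rho(z,\Pi(V))$ is the hyperbolic distance from $z$ to this plane. $|\cdot|$ is the Euclidean norm in $\mathbb{R}^3$. *)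

theory Defs
  imports "HOL-Analysis.Analysis"
begin

text \<open>Points of R^3 are modelled as pairs (x + i y, t) :: complex \<times> real; the product norm
  is the Euclidean norm sqrt(x^2+y^2+t^2). The complex plane is the plane t = 0.\<close>

type_synonym pt3 = "complex \<times> real"

definition H3 :: "pt3 set" where
  "H3 = {p. snd p > 0}"

definition hgt :: "pt3 \<Rightarrow> real" where
  "hgt p = snd p"

definition emb :: "complex \<Rightarrow> pt3" where
  "emb c = (c, 0)"

text \<open>Hyperbolic distance for the metric ds/t on the upper half-space (standard closed form).\<close>
definition hdist :: "pt3 \<Rightarrow> pt3 \<Rightarrow> real" where
  "hdist p q = arcosh (1 + (norm (p - q))\<^sup>2 / (2 * hgt p * hgt q))"

definition Pi_disc :: "complex \<Rightarrow> real \<Rightarrow> pt3 set" where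
  "Pi_disc c r = {p \<in> H3. norm (p - emb c) = r}"

definition hdist_set :: "pt3 \<Rightarrow> pt3 set \<Rightarrow> real" where
  "hdist_set p S = (INF q\<in>S. hdist p q)"

end

theory Submission
  imports Defs
begin

(* The hyperbolic distance rho from a point z of height t to the hemisphere Pi(V) satisfies
   sinh rho = |R^2 - s^2| / (2 t s), where R = |z - v|, and it is attained. For z on Pi(U) with
   V inside U we have s <= R <= 2r - s, so sinh rho <= 2r(r - s) / (t s); against the hypothesis
   sinh rho > 8(r - s)/s this gives t < r/4 < s/2. At height t the two hemispheres are circles
   about u and v of radii p = sqrt(r^2 - t^2) and b = sqrt(s^2 - t^2). From p^2 - b^2 = r^2 - s^2
   and b > s/2 we get r - s <= p - b < 2(r - s). Writing x for the horizontal position of z, the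
   nearest point of the small circle lies at distance |x - v| - b <= p + |u - v| - b < 3(r - s). *)

lemma norm_pt3_squared: "(norm (p :: pt3))\<^sup>2 = (cmod (fst p))\<^sup>2 + (snd p)\<^sup>2"
  by (cases p) (simp add: norm_Pair)

lemma norm_emb_diff: "norm (emb u - emb v) = cmod (u - v)"
  by (simp add: emb_def norm_Pair)

lemma mem_Pi_disc_iff:
  assumes "0 \<le> r"
  shows "p \<in> Pi_disc c r \<longleftrightarrow> 0 < hgt p \<and> (cmod (fst p - c))\<^sup>2 + (hgt p)\<^sup>2 = r\<^sup>2"
proof -
  have "norm (p - emb c) = r \<longleftrightarrow> (norm (p - emb c))\<^sup>2 = r\<^sup>2"
    using assms by (metis norm_ge_zero power2_eq_iff_nonneg)
  then show ?thesis
    by (simp add: Pi_disc_def H3_def hgt_def emb_def norm_pt3_squared)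
qed

lemma Pi_disc_hgt_pos: "p \<in> Pi_disc c r \<Longrightarrow> 0 < hgt p"
  by (simp add: Pi_disc_def H3_def hgt_def)

lemma hdist_nonneg:
  assumes "0 < hgt p" "0 < hgt q"
  shows "0 \<le> hdist p q"
  using assms by (simp add: hdist_def)

lemma hdist_set_le_hdist:
  assumes "q \<in> S" "0 < hgt z" "\<And>p. p \<in> S \<Longrightarrow> 0 < hgt p"
  shows "hdist_set z S \<le> hdist z q"
  unfolding hdist_set_def
  by (rule cINF_lower[OF bdd_belowI[of _ 0]]) (blast intro: hdist_nonneg assms)+

lemma foot_point_identities:
  fixes a t s W N :: real
  assumes W: "W\<^sup>2 = (a\<^sup>2 + t\<^sup>2 - s\<^sup>2)\<^sup>2 + (2 * t * s)\<^sup>2"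
    and N: "N = a\<^sup>2 + t\<^sup>2 + s\<^sup>2" "N \<noteq> 0"
  shows "(2 * s\<^sup>2 / N)\<^sup>2 * a\<^sup>2 + (s * W / N)\<^sup>2 = s\<^sup>2"
    and "(1 - 2 * s\<^sup>2 / N)\<^sup>2 * a\<^sup>2 + t\<^sup>2 + (s * W / N)\<^sup>2 = W\<^sup>2 / N"
  using N by (simp_all only: power_divide power_mult_distrib W)
    (simp_all add: field_simps, simp_all add: algebra_simps eval_nat_numeral)

lemma Pi_disc_foot_point:
  fixes z :: pt3
  assumes "0 < hgt z" "0 < s"
  obtains q where "q \<in> Pi_disc c s"
    and "sinh (hdist z q) = \<bar>(norm (z - emb c))\<^sup>2 - s\<^sup>2\<bar> / (2 * hgt z * s)"
proof -
  define t where "t = hgt z"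
  define a where "a = cmod (fst z - c)"
  define R2 where "R2 = a\<^sup>2 + t\<^sup>2"
  define N where "N = R2 + s\<^sup>2"
  define W where "W = sqrt ((R2 - s\<^sup>2)\<^sup>2 + (2 * t * s)\<^sup>2)"
  define k where "k = 2 * s\<^sup>2 / N"
  define \<tau> where "\<tau> = s * W / N"
  \<comment> \<open>the nearest point of the hemisphere to z, in the vertical half-plane through c and z\<close>
  define q where "q = (c + of_real k * (fst z - c), \<tau>)"
  have t: "0 < t" and "0 < s" using assms by (simp_all add: t_def)
  have N: "0 < N" using \<open>0 < s\<close> by (simp add: N_def R2_def add_nonneg_pos)
  have W2: "W\<^sup>2 = (R2 - s\<^sup>2)\<^sup>2 + (2 * t * s)\<^sup>2" by (simp add: W_def)
  have W: "2 * t * s \<le> W" using t \<open>0 < s\<close> by (simp add: W_def real_le_rsqrt)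
  have "0 < 2 * t * s" using t \<open>0 < s\<close> by simp
  then have "0 < W" using W by linarith
  then have \<tau>: "0 < \<tau>" using \<open>0 < s\<close> N by (simp add: \<tau>_def)
  note identities = foot_point_identities[OF W2[unfolded R2_def] N_def[unfolded R2_def]
      N[THEN less_imp_neq, symmetric]]
  have R2: "(norm (z - emb c))\<^sup>2 = R2"
    by (simp add: norm_pt3_squared R2_def a_def t_def hgt_def emb_def)
  have "k\<^sup>2 * a\<^sup>2 + \<tau>\<^sup>2 = s\<^sup>2" using identities(1) by (simp add: k_def \<tau>_def)
  then have "(cmod (fst q - c))\<^sup>2 + (hgt q)\<^sup>2 = s\<^sup>2"
    by (simp add: q_def hgt_def a_def norm_mult power_mult_distrib)
  then have "q \<in> Pi_disc c s"
    using \<tau> \<open>0 < s\<close> by (simp add: mem_Pi_disc_iff q_def hgt_def)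
  have "fst z - fst q = of_real (1 - k) * (fst z - c)" by (simp add: q_def algebra_simps)
  then have "cmod (fst z - fst q) = \<bar>1 - k\<bar> * a" unfolding a_def by (simp only: norm_mult norm_of_real)
  then have "(norm (z - q))\<^sup>2 = (1 - k)\<^sup>2 * a\<^sup>2 + (t - \<tau>)\<^sup>2"
    by (simp add: norm_pt3_squared power_mult_distrib t_def hgt_def q_def)
  also have "\<dots> = W\<^sup>2 / N - 2 * t * \<tau>"
    using identities(2) by (simp add: k_def \<tau>_def power2_diff)
  finally have zq: "(norm (z - q))\<^sup>2 = W\<^sup>2 / N - 2 * t * \<tau>" .
  have hgt_q: "hgt q = \<tau>" by (simp add: q_def hgt_def)
  have "1 + (norm (z - q))\<^sup>2 / (2 * hgt z * hgt q) = W / (2 * t * s)"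
    unfolding zq t_def[symmetric] hgt_q using t \<tau> \<open>0 < s\<close> \<open>0 < W\<close> N
    by (simp add: \<tau>_def field_simps power2_eq_square)
  then have cosh: "hdist z q = arcosh (W / (2 * t * s))" by (simp add: hdist_def)
  have "(W / (2 * t * s))\<^sup>2 - 1 = ((R2 - s\<^sup>2) / (2 * t * s))\<^sup>2"
    using W2 t \<open>0 < s\<close> by (simp add: field_simps)
  then have "sinh (hdist z q) = \<bar>R2 - s\<^sup>2\<bar> / (2 * t * s)"
    using W t \<open>0 < s\<close> by (simp add: cosh sinh_arcosh_real)
  then show ?thesis using that \<open>q \<in> Pi_disc c s\<close> R2 t_def by simp
qed

lemma sinh_hdist_set_Pi_disc_le:
  assumes "0 < hgt z" "0 < s"
  shows "sinh (hdist_set z (Pi_disc c s)) \<le> \<bar>(norm (z - emb c))\<^sup>2 - s\<^sup>2\<bar> / (2 * hgt z * s)"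
proof -
  obtain q where q: "q \<in> Pi_disc c s"
    and sinh_q: "sinh (hdist z q) = \<bar>(norm (z - emb c))\<^sup>2 - s\<^sup>2\<bar> / (2 * hgt z * s)"
    using Pi_disc_foot_point assms by blast
  have "hdist_set z (Pi_disc c s) \<le> hdist z q"
    using q assms(1) by (rule hdist_set_le_hdist) (rule Pi_disc_hgt_pos)
  then show ?thesis by (simp add: sinh_q[symmetric])
qed

lemma ball_psubset_ballD:
  fixes u v :: "'a::euclidean_space"
  assumes "ball v s \<subset> ball u r" "0 < s"
  shows "dist v u + s \<le> r" and "s < r"
proof -
  show le: "dist v u + s \<le> r" using assms ball_subset_ball_iff[of v s u r] by auto
  show "s < r"
  proof (rule ccontr)
    assume "\<not> s < r"
    then have "dist v u = 0" "s = r" using le zero_le_dist[of v u] by linarith+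
    then show False using assms(1) by simp
  qed
qed

lemma hgt_lt_quarter_radius:
  assumes z: "z \<in> Pi_disc u r" and nested: "cmod (u - v) + s \<le> r" "0 < s" "s < r"
    and far: "8 * (r - s) / s < sinh (hdist_set z (Pi_disc v s))"
  shows "4 * hgt z < r"
proof -
  define t where "t = hgt z"
  define R where "R = norm (z - emb v)"
  have t: "0 < t" using z by (simp add: t_def Pi_disc_hgt_pos)
  have "norm (z - emb u) = r" using z by (simp add: Pi_disc_def)
  then have "\<bar>R - r\<bar> \<le> cmod (u - v)"
    using norm_triangle_ineq3[of "z - emb v" "z - emb u"] by (simp add: R_def norm_emb_diff)
  then have "s \<le> R" "R \<le> 2 * r - s" using nested by linarith+
  then have "\<bar>R\<^sup>2 - s\<^sup>2\<bar> \<le> (2 * r - s)\<^sup>2 - s\<^sup>2"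
    using nested by (simp add: power_mono)
  also have "\<dots> = 4 * r * (r - s)" by (simp add: power2_eq_square algebra_simps)
  finally have R: "\<bar>R\<^sup>2 - s\<^sup>2\<bar> \<le> 4 * r * (r - s)" .
  have "sinh (hdist_set z (Pi_disc v s)) \<le> \<bar>R\<^sup>2 - s\<^sup>2\<bar> / (2 * t * s)"
    using sinh_hdist_set_Pi_disc_le[of z s v] t nested(2) by (simp add: R_def t_def)
  also have "\<dots> \<le> 4 * r * (r - s) / (2 * t * s)"
    using t nested(2) by (intro divide_right_mono R) simp
  finally have near: "sinh (hdist_set z (Pi_disc v s)) \<le> 4 * r * (r - s) / (2 * t * s)" .
  have "(r - s) * (16 * t) = 2 * t * s * (8 * (r - s) / s)" using nested(2) by simp
  also have "\<dots> < 2 * t * s * (4 * r * (r - s) / (2 * t * s))"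
    using far near t nested(2) by (intro mult_strict_left_mono) simp_all
  also have "\<dots> = (r - s) * (4 * r)" using t nested(2) by simp
  finally show ?thesis using nested(3) by (simp add: t_def)
qed

lemma legs_difference_bounds:
  fixes p b r s t :: real
  assumes "p\<^sup>2 + t\<^sup>2 = r\<^sup>2" "b\<^sup>2 + t\<^sup>2 = s\<^sup>2" "0 \<le> p" "0 < s" "s / 2 < b" "s < r"
  shows "r - s \<le> p - b" and "p - b < 2 * (r - s)"
proof -
  have product: "(p - b) * (p + b) = (r - s) * (r + s)"
    using assms(1,2) by (simp add: algebra_simps power2_eq_square)
  have "p\<^sup>2 \<le> r\<^sup>2" "b\<^sup>2 \<le> s\<^sup>2" using assms(1,2) zero_le_power2[of t] by linarith+
  then have "p \<le> r" "b \<le> s"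
    using power2_le_imp_le[of p r] power2_le_imp_le[of b s] assms(4,6) by linarith+
  have pb: "0 < p + b" using assms(3,4,5) by linarith
  show lower: "r - s \<le> p - b"
  proof (rule ccontr)
    assume "\<not> r - s \<le> p - b"
    then have "(p - b) * (p + b) < (r - s) * (p + b)" using pb by simp
    also have "\<dots> \<le> (r - s) * (r + s)" using \<open>p \<le> r\<close> \<open>b \<le> s\<close> assms(6) by simp
    finally show False using product by simp
  qed
  have "r + s < 2 * (p + b)" using lower assms(5,6) by (simp add: field_simps)
  then have "(r - s) * (r + s) < (r - s) * (2 * (p + b))" using assms(6) by simp
  then have "(p - b) * (p + b) < (2 * (r - s)) * (p + b)" unfolding product by (simp add: algebra_simps)
  then show "p - b < 2 * (r - s)" using pb by simp
qed

lemma Pi_disc_point_at_height: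
  assumes "0 < t" "t \<le> s" "ze \<noteq> c"
  obtains w where "w \<in> Pi_disc c s" "hgt w = t"
    "norm ((ze, t) - w) = \<bar>cmod (ze - c) - sqrt (s\<^sup>2 - t\<^sup>2)\<bar>"
proof -
  define a where "a = cmod (ze - c)"
  define b where "b = sqrt (s\<^sup>2 - t\<^sup>2)"
  define w where "w = (c + of_real (b / a) * (ze - c), t)"
  have a: "0 < a" using assms(3) by (simp add: a_def)
  have "t\<^sup>2 \<le> s\<^sup>2" using assms(1,2) by (simp add: power_mono)
  then have b: "0 \<le> b" "b\<^sup>2 = s\<^sup>2 - t\<^sup>2" by (simp_all add: b_def)
  have "fst w - c = of_real (b / a) * (ze - c)" by (simp add: w_def)
  then have "cmod (fst w - c) = \<bar>b / a\<bar> * a" unfolding a_def by (simp only: norm_mult norm_of_real)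
  then have "cmod (fst w - c) = b" using a b(1) by simp
  then have "w \<in> Pi_disc c s"
    using b(2) assms(1,2) by (simp add: mem_Pi_disc_iff w_def hgt_def)
  moreover have "hgt w = t" by (simp add: w_def hgt_def)
  moreover have "norm ((ze, t) - w) = \<bar>a - b\<bar>"
  proof -
    have "ze - fst w = of_real (1 - b / a) * (ze - c)" by (simp add: w_def algebra_simps)
    then have "cmod (ze - fst w) = \<bar>1 - b / a\<bar> * a" unfolding a_def by (simp only: norm_mult norm_of_real)
    moreover have "(ze, t) - w = (ze - fst w, 0)" by (simp add: w_def)
    ultimately have "norm ((ze, t) - w) = \<bar>(1 - b / a) * a\<bar>" using a by (simp add: norm_Pair abs_mult)
    then show ?thesis using a by (simp add: algebra_simps)
  qed
  ultimately show ?thesis using that by (simp add: a_def b_def)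
qed

lemma nearest_same_height_dist_lt:
  assumes z: "z \<in> Pi_disc u r" and nested: "cmod (u - v) + s \<le> r" "s < r"
    and low: "2 * hgt z < s"
    and nearest: "\<And>w'. w' \<in> Pi_disc v s \<Longrightarrow> hgt w' = hgt z \<Longrightarrow> norm (z - w) \<le> norm (z - w')"
  shows "norm (z - w) < 3 * (r - s)"
proof -
  define t where "t = hgt z"
  define p where "p = cmod (fst z - u)"
  define a where "a = cmod (fst z - v)"
  define b where "b = sqrt (s\<^sup>2 - t\<^sup>2)"
  define d where "d = cmod (u - v)"
  have t: "0 < t" using z by (simp add: t_def Pi_disc_hgt_pos)
  have "t \<le> s" "0 < s" "0 \<le> p" using t low by (simp_all add: t_def p_def)
  have "p\<^sup>2 + t\<^sup>2 = r\<^sup>2" using z nested t low by (simp add: mem_Pi_disc_iff p_def t_def)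
  have "t\<^sup>2 \<le> s\<^sup>2" using t \<open>t \<le> s\<close> by (simp add: power_mono)
  then have "b\<^sup>2 + t\<^sup>2 = s\<^sup>2" "0 \<le> b" by (simp_all add: b_def)
  moreover have "4 * t\<^sup>2 < s\<^sup>2" using power_strict_mono[of "2 * t" s 2] t low by (simp add: t_def)
  ultimately have "s\<^sup>2 < 4 * b\<^sup>2" using zero_le_power2[of s] by linarith
  then have "(s / 2)\<^sup>2 < b\<^sup>2" by (simp add: power_divide)
  then have "s / 2 < b" using \<open>0 \<le> b\<close> by (rule power_less_imp_less_base)
  note legs = legs_difference_bounds[OF \<open>p\<^sup>2 + t\<^sup>2 = r\<^sup>2\<close> \<open>b\<^sup>2 + t\<^sup>2 = s\<^sup>2\<close>
      \<open>0 \<le> p\<close> \<open>0 < s\<close> \<open>s / 2 < b\<close> nested(2)]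
  have "p \<le> a + d" "a \<le> p + d"
    using dist_triangle[of "fst z" u v] dist_triangle[of "fst z" v u]
    by (simp_all add: p_def a_def d_def dist_norm norm_minus_commute)
  then have "b \<le> a" "0 < b" using legs nested(1)[folded d_def] \<open>s / 2 < b\<close> \<open>0 < s\<close> by linarith+
  then have "fst z \<noteq> v" by (auto simp: a_def)
  then obtain w0 where "w0 \<in> Pi_disc v s" "hgt w0 = t" "norm ((fst z, t) - w0) = \<bar>a - b\<bar>"
    using Pi_disc_point_at_height[OF t \<open>t \<le> s\<close>] unfolding a_def b_def by blast
  moreover have "(fst z, t) = z" by (simp add: t_def hgt_def)
  ultimately have "norm (z - w) \<le> a - b" using nearest[of w0] \<open>b \<le> a\<close> by (simp add: t_def)
  then show ?thesis using legs \<open>a \<le> p + d\<close> nested(1)[folded d_def] by (simp add: field_simps)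
qed

theorem lemma5p1:
  fixes u v :: complex and r s :: real and z :: pt3
  assumes "r > 0" and "s > 0"
    and "ball v s \<subseteq> ball u r" and "ball v s \<noteq> ball u r"
    and "z \<in> Pi_disc u r"
    and "r / s < min 2 (1 + sinh (hdist_set z (Pi_disc v s)) / 8)"
  shows "hgt z < s / 2 \<and>
    (\<forall>w. w \<in> Pi_disc v s \<and> hgt w = hgt z \<and>
         (\<forall>w'. w' \<in> Pi_disc v s \<and> hgt w' = hgt z \<longrightarrow> norm (z - w) \<le> norm (z - w'))
         \<longrightarrow> norm (z - w) < 3 * (r - s))"
proof -
  have "ball v s \<subset> ball u r" using assms(3,4) by blast
  then have "dist v u + s \<le> r" "s < r" using assms(2) by (rule ball_psubset_ballD)+
  then have nested: "cmod (u - v) + s \<le> r" "s < r" by (simp_all add: dist_norm norm_minus_commute)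
  have "r < 2 * s" and far: "8 * (r - s) / s < sinh (hdist_set z (Pi_disc v s))"
    using assms(2,6) by (simp_all add: field_simps)
  have "4 * hgt z < r" using hgt_lt_quarter_radius[OF assms(5) nested(1) assms(2) nested(2) far] .
  then have low: "hgt z < s / 2" using \<open>r < 2 * s\<close> by linarith
  have "norm (z - w) < 3 * (r - s)"
    if "\<forall>w'. w' \<in> Pi_disc v s \<and> hgt w' = hgt z \<longrightarrow> norm (z - w) \<le> norm (z - w')" for w
    using nearest_same_height_dist_lt[OF assms(5) nested, of w] low that by auto
  with low show ?thesis by blast
qed

end
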